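(* Let $I$ be a monoid with identity $1$ and let $\mathrm{Inv}=\mathrm{Map}^l_I\circ\mathrm{Map}^r_I$, restricted to the category $\mathrm{bAct}(I)$ of finite $I$-sets. For $M$ in $\mathrm{bAct}(I)$ let $\overline{\mathrm{ev}}_M:\mathrm{Inv}(M)\to M$, $f\mapsto f(1)(1)$. Then the maps $\overline{\mathrm{ev}}_{\mathrm{Inv}(M)}:\mathrm{Inv}(\mathrm{Inv}(M))\to\mathrm{Inv}(M)$ define a natural isomorphism $\mathrm{Inv}\circ\mathrm{Inv}\Rightarrow\mathrm{Inv}$.
   Context: Let $I$ be a monoid with operation $\otimes$. For a set $X$, $\mathrm{End}_l(X)$ denotes self-maps written on the left with product $f\circ g$ ($g$ first); $\mathrm{End}_r(X)$ denotes self-maps written on the right, $x\mapsto(x)f$, with $(x)(fg)=((x)f)g$. An $I$-set is a set $X$ with a pair $\xi=(\xi_l,\xi_r)$ of monoid homomorphisms $\xi_l:I\to\mathrm{End}_l(X)$, $\xi_r:I\to\mathrm{End}_r(X)$ with $(\xi_l(i)(x))\xi_r(j)=\xi_l(i)((x)\xi_r(j))$; $f:(X,\xi)\to(Y,\eta)$ is $I$-equivariant if $(f(\xi_l(i)(x)))\eta_r(i)=\eta_l(i)(f((x)\xi_r(i)))$ for all $i,x$. An $I$-set is invertible on one side if either $\xi_l(i)$ is bijective for all $i$ or $\xi_r(i)$ is bijective for all $i$; $\mathrm{bAct}(I)$ is the category of finite $I$-sets that are products (componentwise action) of $I$-sets invertible on one side, with $I$-equivariant maps. For an $I$-set $(A,\alpha)$: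 $\mathrm{Map}^l_I(A)$ is the set of $f:I\to A$ with $(f(j))\alpha_r(i)=\alpha_l(i)(f(j\otimes i))$ for all $i,j$, with action $\theta_l(k)=\mathrm{id}$, $((f)\theta_r(k))(j)=f(k\otimes j)$; $\mathrm{Map}^r_I(A)$ is the set of $f:I\to A$ with $(f(i\otimes j))\alpha_r(i)=\alpha_l(i)(f(j))$ for all $i,j$, with action $(\vartheta_l(k)(f))(i)=f(i\otimes k)$, $\vartheta_r(k)=\mathrm{id}$. Both are functors via $u\mapsto(h\mapsto u\circ h)$. *)

theory Defs
  imports Main "HOL-Library.FuncSet"
begin

text \<open>The monoid I is modelled as a type of class monoid_mult: the monoid operation
  is written (*) and the identity 1.
  An I-set is a carrier set together with a left action (xl i : X -> X, written on the left)
  and a right action (xr i x stands for (x) xi_r(i)).\<close>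

record ('i, 'a) iset =
  iset_carrier :: "'a set"
  iset_actl :: "'i \<Rightarrow> 'a \<Rightarrow> 'a"
  iset_actr :: "'i \<Rightarrow> 'a \<Rightarrow> 'a"

definition is_iset :: "('i::monoid_mult, 'a) iset \<Rightarrow> bool" where
  "is_iset X \<longleftrightarrow>
     (\<forall>i. \<forall>x\<in>iset_carrier X. iset_actl X i x \<in> iset_carrier X \<and> iset_actr X i x \<in> iset_carrier X)
   \<and> (\<forall>x\<in>iset_carrier X. iset_actl X 1 x = x \<and> iset_actr X 1 x = x)
   \<and> (\<forall>i j. \<forall>x\<in>iset_carrier X. iset_actl X (i * j) x = iset_actl X i (iset_actl X j x))
   \<and> (\<forall>i j. \<forall>x\<in>iset_carrier X. iset_actr X (i * j) x = iset_actr X j (iset_actr X i x))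
   \<and> (\<forall>i j. \<forall>x\<in>iset_carrier X.
        iset_actr X j (iset_actl X i x) = iset_actl X i (iset_actr X j x))"

definition one_side_invertible :: "('i::monoid_mult, 'a) iset \<Rightarrow> bool" where
  "one_side_invertible X \<longleftrightarrow>
     (\<forall>i. bij_betw (iset_actl X i) (iset_carrier X) (iset_carrier X))
   \<or> (\<forall>i. bij_betw (iset_actr X i) (iset_carrier X) (iset_carrier X))"

definition equivariant :: "('i::monoid_mult, 'a) iset \<Rightarrow> ('i, 'b) iset \<Rightarrow> ('a \<Rightarrow> 'b) \<Rightarrow> bool" where
  "equivariant X Y f \<longleftrightarrow>
     f ` iset_carrier X \<subseteq> iset_carrier Y
   \<and> (\<forall>i. \<forall>x\<in>iset_carrier X.
        iset_actr Y i (f (iset_actl X i x)) = iset_actl Y i (f (iset_actr X i x)))"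

definition bAct :: "('i::monoid_mult, 'a) iset \<Rightarrow> bool" where
  "bAct M \<longleftrightarrow> is_iset M \<and> finite (iset_carrier M) \<and>
     (\<exists>(n::nat) (X :: nat \<Rightarrow> ('i, 'a) iset) \<phi>.
        (\<forall>k<n. is_iset (X k) \<and> one_side_invertible (X k))
      \<and> bij_betw \<phi> (iset_carrier M) (PiE {..<n} (\<lambda>k. iset_carrier (X k)))
      \<and> (\<forall>i. \<forall>x\<in>iset_carrier M.
           \<phi> (iset_actl M i x) = (\<lambda>k\<in>{..<n}. iset_actl (X k) i (\<phi> x k))
         \<and> \<phi> (iset_actr M i x) = (\<lambda>k\<in>{..<n}. iset_actr (X k) i (\<phi> x k))))"

definition MapL :: "('i::monoid_mult, 'a) iset \<Rightarrow> ('i, 'i \<Rightarrow> 'a) iset" where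
  "MapL A = \<lparr> iset_carrier = {f. (\<forall>j. f j \<in> iset_carrier A) \<and>
                  (\<forall>i j. iset_actr A i (f j) = iset_actl A i (f (j * i)))},
             iset_actl = (\<lambda>k f. f),
             iset_actr = (\<lambda>k f. (\<lambda>j. f (k * j))) \<rparr>"

definition MapR :: "('i::monoid_mult, 'a) iset \<Rightarrow> ('i, 'i \<Rightarrow> 'a) iset" where
  "MapR A = \<lparr> iset_carrier = {f. (\<forall>j. f j \<in> iset_carrier A) \<and>
                  (\<forall>i j. iset_actr A i (f (i * j)) = iset_actl A i (f j))},
             iset_actl = (\<lambda>k f. (\<lambda>i. f (i * k))),
             iset_actr = (\<lambda>k f. f) \<rparr>"

definition Map_mor :: "('a \<Rightarrow> 'b) \<Rightarrow> ('i \<Rightarrow> 'a) \<Rightarrow> ('i \<Rightarrow> 'b)" where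
  "Map_mor u h = u \<circ> h"

definition Inv :: "('i::monoid_mult, 'a) iset \<Rightarrow> ('i, 'i \<Rightarrow> 'i \<Rightarrow> 'a) iset" where
  "Inv M = MapL (MapR M)"

definition Inv_mor :: "('a \<Rightarrow> 'b) \<Rightarrow> ('i \<Rightarrow> 'i \<Rightarrow> 'a) \<Rightarrow> ('i \<Rightarrow> 'i \<Rightarrow> 'b)" where
  "Inv_mor u = Map_mor (Map_mor u)"

definition evbar :: "('i::monoid_mult \<Rightarrow> 'i \<Rightarrow> 'a) \<Rightarrow> 'a" where
  "evbar f = f 1 1"

end

theory Submission
  imports Defs
begin

text \<open>Unfolding the definitions, an element of Inv(M) is a two-variable function H with
  H j x = H (j i) (x i) and (H j (i x)) \<xi>_r(i) = \<xi>_l(i) (H j x). For M in bAct(I) such an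
  element is determined by its value H 1 1: on a finite factor invertible on one side, the
  invertible action is injective, and a counting argument makes the other action injective
  on the values of such elements; then one argues componentwise. Consequently each shift
  H \<mapsto> H (k \<cdot> _), the right action of Inv(M), is injective, hence bijective by finiteness.
  An element \<Phi> of Inv(Inv(M)) satisfies \<Phi> j x (x \<cdot> _) = \<Phi> 1 1 (j \<cdot> _), so it is recovered
  from \<Phi> 1 1 by inverting shifts; this inverse is the inverse of the evaluation.\<close>

definition inv_elem :: "('i::monoid_mult, 'a) iset \<Rightarrow> ('i \<Rightarrow> 'i \<Rightarrow> 'a) \<Rightarrow> bool" where
  "inv_elem X H \<longleftrightarrow> (\<forall>j x. H j x \<in> iset_carrier X) \<and> (\<forall>i j x. H j x = H (j * i) (x * i))
     \<and> (\<forall>i j x. iset_actr X i (H j (i * x)) = iset_actl X i (H j x))"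

definition shift :: "'i::times \<Rightarrow> ('i \<Rightarrow> 'b) \<Rightarrow> 'i \<Rightarrow> 'b" where
  "shift k F = (\<lambda>j. F (k * j))"

lemma Inv_carrier: "iset_carrier (Inv M) = Collect (inv_elem M)"
  unfolding Inv_def MapL_def MapR_def inv_elem_def by (auto simp: fun_eq_iff)

lemma Inv_actl [simp]: "iset_actl (Inv M) i F = F"
  by (simp add: Inv_def MapL_def)

lemma Inv_actr [simp]: "iset_actr (Inv M) k F = shift k F"
  by (simp add: Inv_def MapL_def shift_def)

lemma shift_mult: "shift (a * b) F = shift b (shift a (F :: 'i::semigroup_mult \<Rightarrow> 'b))"
  unfolding shift_def by (simp add: mult.assoc)

lemma inv_elem_in_carrier: "inv_elem X H \<Longrightarrow> H j x \<in> iset_carrier X"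
  unfolding inv_elem_def by blast

lemma inv_elem_rescale: "inv_elem X H \<Longrightarrow> H j x = H (j * i) (x * i)"
  unfolding inv_elem_def by blast

lemma inv_elem_act_compat: "inv_elem X H \<Longrightarrow> iset_actr X i (H j (i * x)) = iset_actl X i (H j x)"
  unfolding inv_elem_def by blast

lemma inv_elem_diag: "inv_elem X H \<Longrightarrow> H j j = H 1 1"
  using inv_elem_rescale[of X H 1 1 j] by simp

lemma inv_elem_act_compat_one: "inv_elem X H \<Longrightarrow> iset_actr X i (H j i) = iset_actl X i (H j 1)"
  using inv_elem_act_compat[of X H i j 1] by simp

lemma inv_elem_act_compat_rescaled:
  assumes "inv_elem X H"
  shows "iset_actr X i (H j 1) = iset_actl X i (H (j * i) 1)"
  using inv_elem_rescale[OF assms, of j 1 i] inv_elem_act_compat_one[OF assms, of i "j * i"] by simp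

lemma inv_elem_actr_at_one: "inv_elem X H \<Longrightarrow> iset_actr X j (H 1 1) = iset_actl X j (H j 1)"
  using inv_elem_act_compat_rescaled[of X H j 1] by simp

lemma inv_elem_shift: "inv_elem M G \<Longrightarrow> inv_elem M (shift k G)"
  unfolding inv_elem_def shift_def by (metis mult.assoc)

lemma inv_elem_map:
  assumes H: "inv_elem X H"
    and into: "\<And>x. x \<in> iset_carrier X \<Longrightarrow> \<psi> x \<in> iset_carrier Y"
    and actl: "\<And>i x. x \<in> iset_carrier X \<Longrightarrow> \<psi> (iset_actl X i x) = iset_actl Y i (\<psi> x)"
    and actr: "\<And>i x. x \<in> iset_carrier X \<Longrightarrow> \<psi> (iset_actr X i x) = iset_actr Y i (\<psi> x)"
  shows "inv_elem Y (\<lambda>j x. \<psi> (H j x))"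
  unfolding inv_elem_def
  using inv_elem_in_carrier[OF H] inv_elem_rescale[OF H] inv_elem_act_compat[OF H] into actl actr
  by metis

lemma inv_elem_eq_if_cancel:
  assumes H: "inv_elem X H" and H': "inv_elem X H'" and at_one: "H 1 1 = H' 1 1"
    and l_cancel: "\<And>i j. iset_actl X i (H j 1) = iset_actl X i (H' j 1) \<Longrightarrow> H j 1 = H' j 1"
    and r_cancel: "\<And>i j x. iset_actr X i (H j x) = iset_actr X i (H' j x) \<Longrightarrow> H j x = H' j x"
  shows "H = H'"
proof -
  have "H j 1 = H' j 1" for j
    using l_cancel inv_elem_actr_at_one[OF H, of j] inv_elem_actr_at_one[OF H', of j] at_one by metis
  then have "H j x = H' j x" for j x
    using r_cancel inv_elem_act_compat_one[OF H, of x j] inv_elem_act_compat_one[OF H', of x j] by metis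
  then show ?thesis by (simp add: fun_eq_iff)
qed

lemma inj_on_if_image_subset:
  assumes "finite Z" "inj_on f Z" "f ` Z \<subseteq> g ` Z"
  shows "inj_on g Z"
proof -
  have "card Z \<le> card (g ` Z)"
    using assms card_image card_mono finite_imageI by metis
  with card_image_le[OF \<open>finite Z\<close>, of g] show ?thesis
    by (simp add: inj_on_iff_eq_card[OF \<open>finite Z\<close>])
qed

definition inv_values :: "('i::monoid_mult, 'a) iset \<Rightarrow> 'a set" where
  "inv_values X = {H j x | H j x. inv_elem X H}"

definition inv_values_at_one :: "('i::monoid_mult, 'a) iset \<Rightarrow> 'a set" where
  "inv_values_at_one X = {H j 1 | H j. inv_elem X H}"

lemma inj_on_actr_inv_values:
  assumes fin: "finite (iset_carrier X)" and l_inj: "\<And>i. inj_on (iset_actl X i) (iset_carrier X)"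
  shows "inj_on (iset_actr X i) (inv_values X)"
proof (rule inj_on_if_image_subset)
  have sub: "inv_values X \<subseteq> iset_carrier X"
    unfolding inv_values_def using inv_elem_in_carrier by blast
  then show "finite (inv_values X)" using fin finite_subset by blast
  show "inj_on (iset_actl X i) (inv_values X)" using l_inj sub inj_on_subset by blast
  show "iset_actl X i ` inv_values X \<subseteq> iset_actr X i ` inv_values X"
  proof
    fix z assume "z \<in> iset_actl X i ` inv_values X"
    then obtain G j x where G: "inv_elem X G" and z: "z = iset_actl X i (G j x)"
      unfolding inv_values_def by blast
    have "G j (i * x) \<in> inv_values X" unfolding inv_values_def using G by blast
    then show "z \<in> iset_actr X i ` inv_values X" using z inv_elem_act_compat[OF G] by (metis image_eqI)
  qed
qed

lemma inj_on_actl_inv_values_at_one: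
  assumes fin: "finite (iset_carrier X)" and r_inj: "\<And>i. inj_on (iset_actr X i) (iset_carrier X)"
  shows "inj_on (iset_actl X i) (inv_values_at_one X)"
proof (rule inj_on_if_image_subset)
  have sub: "inv_values_at_one X \<subseteq> iset_carrier X"
    unfolding inv_values_at_one_def using inv_elem_in_carrier by blast
  then show "finite (inv_values_at_one X)" using fin finite_subset by blast
  show "inj_on (iset_actr X i) (inv_values_at_one X)" using r_inj sub inj_on_subset by blast
  show "iset_actr X i ` inv_values_at_one X \<subseteq> iset_actl X i ` inv_values_at_one X"
  proof
    fix z assume "z \<in> iset_actr X i ` inv_values_at_one X"
    then obtain G j where G: "inv_elem X G" and z: "z = iset_actr X i (G j 1)"
      unfolding inv_values_at_one_def by blast
    have "G (j * i) 1 \<in> inv_values_at_one X" unfolding inv_values_at_one_def using G by blast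
    then show "z \<in> iset_actl X i ` inv_values_at_one X"
      using z inv_elem_act_compat_rescaled[OF G] by (metis image_eqI)
  qed
qed

lemma one_side_invertible_inv_elem_eq:
  assumes fin: "finite (iset_carrier X)" and osi: "one_side_invertible X"
    and H: "inv_elem X H" and H': "inv_elem X H'" and at_one: "H 1 1 = H' 1 1"
  shows "H = H'"
proof -
  have vals: "H j x \<in> inv_values X" "H' j x \<in> inv_values X"
    "H j 1 \<in> inv_values_at_one X" "H' j 1 \<in> inv_values_at_one X" for j x
    unfolding inv_values_def inv_values_at_one_def using H H' by blast+
  have car: "H j x \<in> iset_carrier X" "H' j x \<in> iset_carrier X" for j x
    using inv_elem_in_carrier H H' by blast+
  from osi consider
      "\<And>i. inj_on (iset_actl X i) (iset_carrier X)"
    | "\<And>i. inj_on (iset_actr X i) (iset_carrier X)"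
    unfolding one_side_invertible_def using bij_betw_imp_inj_on by blast
  then show ?thesis
  proof cases
    case 1
    show ?thesis
      using inv_elem_eq_if_cancel[OF H H' at_one] 1 car inj_on_actr_inv_values[OF fin 1] vals
      by (meson inj_onD)
  next
    case 2
    show ?thesis
      using inv_elem_eq_if_cancel[OF H H' at_one] 2 car inj_on_actl_inv_values_at_one[OF fin 2] vals
      by (meson inj_onD)
  qed
qed

lemma finite_PiE_factor:
  assumes "finite (PiE I S)" "PiE I S \<noteq> {}" "k \<in> I"
  shows "finite (S k)"
  using finite_imageI[OF assms(1), of "\<lambda>f. f k"] assms(2,3) by (simp add: image_projection_PiE)

lemma bAct_inv_elem_eq:
  fixes M :: "('i::monoid_mult, 'a) iset"
  assumes b: "bAct M" and G: "inv_elem M G" and G': "inv_elem M G'" and at_one: "G 1 1 = G' 1 1"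
  shows "G = G'"
proof -
  obtain n and X :: "nat \<Rightarrow> ('i, 'a) iset" and \<phi> where finM: "finite (iset_carrier M)"
    and Xs: "\<And>k. k < n \<Longrightarrow> one_side_invertible (X k)"
    and bij: "bij_betw \<phi> (iset_carrier M) (PiE {..<n} (\<lambda>k. iset_carrier (X k)))"
    and act: "\<forall>i. \<forall>x\<in>iset_carrier M. \<phi> (iset_actl M i x) = (\<lambda>k\<in>{..<n}. iset_actl (X k) i (\<phi> x k))
         \<and> \<phi> (iset_actr M i x) = (\<lambda>k\<in>{..<n}. iset_actr (X k) i (\<phi> x k))"
    using b unfolding bAct_def by blast
  let ?P = "PiE {..<n} (\<lambda>k. iset_carrier (X k))"
  have \<phi>_into: "\<phi> m \<in> ?P" if "m \<in> iset_carrier M" for m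
    using bij that bij_betwE by blast
  have G_car: "G j x \<in> iset_carrier M" "G' j x \<in> iset_carrier M" for j x
    using inv_elem_in_carrier G G' by blast+
  have "finite ?P" using bij finM bij_betw_finite by blast
  moreover have "?P \<noteq> {}" using \<phi>_into[OF G_car(1)] by blast
  ultimately have finX: "finite (iset_carrier (X k))" if "k < n" for k
    using finite_PiE_factor that by (metis lessThan_iff)
  have component: "inv_elem (X k) (\<lambda>j x. \<phi> (H j x) k)" if "inv_elem M H" "k < n" for H k
    using that by (intro inv_elem_map[where \<psi> = "\<lambda>m. \<phi> m k"]) (auto simp: act dest: \<phi>_into)
  have "\<phi> (G j x) k = \<phi> (G' j x) k" for j x k
  proof (cases "k < n")
    case True
    then show ?thesis
      using one_side_invertible_inv_elem_eq[OF finX Xs component[OF G] component[OF G']] at_one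
      by (metis (no_types, lifting))
  next
    case False
    then show ?thesis using PiE_arb \<phi>_into G_car by (metis lessThan_iff)
  qed
  then have "G j x = G' j x" for j x
    using bij_betw_imp_inj_on[OF bij] G_car by (meson ext inj_onD)
  then show ?thesis by (simp add: fun_eq_iff)
qed

lemma bAct_inj_on_shift:
  assumes "bAct M" shows "inj_on (shift k) (Collect (inv_elem M))"
proof
  fix G G' assume G: "G \<in> Collect (inv_elem M)" and G': "G' \<in> Collect (inv_elem M)"
    and eq: "shift k G = shift k G'"
  have "G k k = G' k k" using fun_cong[OF eq, of 1] by (simp add: shift_def)
  with G G' have "G 1 1 = G' 1 1" using inv_elem_diag by (metis mem_Collect_eq)
  with G G' show "G = G'" using bAct_inv_elem_eq[OF assms] by simp
qed

lemma bAct_finite_inv_elems: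
  assumes b: "bAct M" shows "finite (Collect (inv_elem M))"
proof -
  have "inj_on (\<lambda>H. H 1 1) (Collect (inv_elem M))"
    using bAct_inv_elem_eq[OF b] by (auto intro: inj_onI)
  moreover have "(\<lambda>H. H 1 1) ` Collect (inv_elem M) \<subseteq> iset_carrier M"
    using inv_elem_in_carrier by blast
  moreover have "finite (iset_carrier M)" using b unfolding bAct_def by blast
  ultimately show ?thesis by (meson finite_imageD finite_subset)
qed

lemma bAct_shift_image:
  assumes "bAct M" shows "shift k ` Collect (inv_elem M) = Collect (inv_elem M)"
proof (rule endo_inj_surj[OF bAct_finite_inv_elems[OF assms]])
  show "shift k ` Collect (inv_elem M) \<subseteq> Collect (inv_elem M)"
    using inv_elem_shift by blast
qed (rule bAct_inj_on_shift[OF assms])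

definition evbar_inv :: "('i::monoid_mult, 'a) iset \<Rightarrow> ('i \<Rightarrow> 'i \<Rightarrow> 'a) \<Rightarrow> 'i \<Rightarrow> 'i \<Rightarrow> ('i \<Rightarrow> 'i \<Rightarrow> 'a)" where
  "evbar_inv M G = (\<lambda>j x. the_inv_into (Collect (inv_elem M)) (shift x) (shift j G))"

lemma evbar_inv_unique:
  assumes "bAct M" "inv_elem M F" "shift x F = shift j G"
  shows "evbar_inv M G j x = F"
  unfolding evbar_inv_def
  by (rule the_inv_into_f_eq[OF bAct_inj_on_shift[OF assms(1)]]) (use assms in auto)

lemma evbar_inv_spec:
  assumes b: "bAct M" and G: "inv_elem M G"
  shows "inv_elem M (evbar_inv M G j x) \<and> shift x (evbar_inv M G j x) = shift j G"
proof -
  have img: "shift j G \<in> shift x ` Collect (inv_elem M)"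
    using bAct_shift_image[OF b] inv_elem_shift[OF G] by simp
  show ?thesis
    unfolding evbar_inv_def
    using the_inv_into_into[OF bAct_inj_on_shift[OF b] img order_refl]
      f_the_inv_into_f[OF bAct_inj_on_shift[OF b] img]
    by simp
qed

lemma inv_elem_evbar_inv:
  assumes b: "bAct M" and G: "inv_elem M G" shows "inv_elem (Inv M) (evbar_inv M G)"
  unfolding inv_elem_def[of "Inv M"]
proof (intro conjI allI)
  fix j x show "evbar_inv M G j x \<in> iset_carrier (Inv M)"
    using evbar_inv_spec[OF b G] by (simp add: Inv_carrier)
next
  fix i j x
  let ?F = "evbar_inv M G (j * i) (x * i)"
  have F: "inv_elem M ?F" "shift i (shift x ?F) = shift i (shift j G)"
    using evbar_inv_spec[OF b G, of "j * i" "x * i"] by (simp_all add: shift_mult)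
  then have "shift x ?F = shift j G"
    using inj_onD[OF bAct_inj_on_shift[OF b]] inv_elem_shift[OF F(1)] inv_elem_shift[OF G]
    by simp
  then show "evbar_inv M G j x = ?F" using evbar_inv_unique[OF b F(1)] by blast
next
  fix i j x
  let ?F = "evbar_inv M G j (i * x)"
  have F: "inv_elem M ?F" "shift x (shift i ?F) = shift j G"
    using evbar_inv_spec[OF b G, of j "i * x"] by (simp_all add: shift_mult)
  then show "iset_actr (Inv M) i ?F = iset_actl (Inv M) i (evbar_inv M G j x)"
    using evbar_inv_unique[OF b inv_elem_shift[OF F(1)]] by simp
qed

lemma inv_elem_Inv_shift:
  assumes "inv_elem (Inv M) \<Phi>" shows "shift x (\<Phi> j x) = shift j (\<Phi> 1 1)"
  using inv_elem_actr_at_one[OF assms, of j] inv_elem_act_compat_one[OF assms, of x j] by simp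

lemma equivariant_evbar: "equivariant (Inv X) X evbar"
  unfolding equivariant_def evbar_def
  using inv_elem_in_carrier inv_elem_actr_at_one by (fastforce simp: Inv_carrier shift_def)

lemma equivariant_evbar_inv:
  assumes b: "bAct M" shows "equivariant (Inv M) (Inv (Inv M)) (evbar_inv M)"
  unfolding equivariant_def
proof (intro conjI allI ballI)
  show "evbar_inv M ` iset_carrier (Inv M) \<subseteq> iset_carrier (Inv (Inv M))"
    using inv_elem_evbar_inv[OF b] by (auto simp: Inv_carrier)
next
  fix i G assume "G \<in> iset_carrier (Inv M)"
  then have G: "inv_elem M G" by (simp add: Inv_carrier)
  have "evbar_inv M G (i * j) x = evbar_inv M (shift i G) j x" for j x
    using evbar_inv_spec[OF b G, of "i * j" x] evbar_inv_unique[OF b] by (metis shift_mult)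
  then show "iset_actr (Inv (Inv M)) i (evbar_inv M (iset_actl (Inv M) i G)) =
             iset_actl (Inv (Inv M)) i (evbar_inv M (iset_actr (Inv M) i G))"
    by (simp add: shift_def fun_eq_iff)
qed

lemma evbar_inv_evbar:
  assumes b: "bAct M" and \<Phi>: "\<Phi> \<in> iset_carrier (Inv (Inv M))"
  shows "evbar_inv M (evbar \<Phi>) = \<Phi>"
proof -
  have \<Phi>_elem: "inv_elem (Inv M) \<Phi>" using \<Phi> by (simp add: Inv_carrier)
  then have "inv_elem M (\<Phi> j x)" for j x
    using inv_elem_in_carrier by (fastforce simp: Inv_carrier)
  then show ?thesis
    unfolding evbar_def using evbar_inv_unique[OF b] inv_elem_Inv_shift[OF \<Phi>_elem]
    by (simp add: fun_eq_iff)
qed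

lemma evbar_evbar_inv:
  assumes "bAct M" "f \<in> iset_carrier (Inv M)" shows "evbar (evbar_inv M f) = f"
  unfolding evbar_def using assms evbar_inv_unique[OF assms(1), of f 1 1 f] by (simp add: Inv_carrier)

lemma evbar_Inv_mor: "evbar (Inv_mor u F) = u (evbar F)"
  by (simp add: evbar_def Inv_mor_def Map_mor_def)

theorem mainTheorem13:
  shows
   "(\<forall>M :: ('i::monoid_mult, 'a) iset. bAct M \<longrightarrow>
       equivariant (Inv (Inv M)) (Inv M) evbar
     \<and> (\<exists>g. equivariant (Inv M) (Inv (Inv M)) g
           \<and> (\<forall>F\<in>iset_carrier (Inv (Inv M)). g (evbar F) = F)
           \<and> (\<forall>f\<in>iset_carrier (Inv M). evbar (g f) = f)))
  \<and> (\<forall>(M :: ('i, 'a) iset) (N :: ('i, 'b) iset) u.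
       bAct M \<longrightarrow> bAct N \<longrightarrow> equivariant M N u \<longrightarrow>
       (\<forall>F\<in>iset_carrier (Inv (Inv M)).
          evbar (Inv_mor (Inv_mor u) F) = Inv_mor u (evbar F)))"
  using equivariant_evbar equivariant_evbar_inv evbar_inv_evbar evbar_evbar_inv evbar_Inv_mor
  by blast

end
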